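(* Work in max-plus algebra. Consider the stochastic dynamic system $\bm{x}(k)=\bm{A}^{T}(k)\bm{x}(k-1)$, $k=1,2,\ldots$, with $\bm{x}(0)=\bm{1}$, where each $\bm{A}(k)$ is a random $n\times n$ block diagonal matrix \[ \bm{A}(k)=\begin{pmatrix}\bm{D}_{1}(k)&&\bm{0}\\&\ddots&\\ \bm{0}&&\bm{D}_{s}(k)\end{pmatrix} \] (block sizes independent of $k$). For $r=1,\ldots,s$ let $\bm{D}_{rk}=\bm{D}_{r}(1)\cdots\bm{D}_{r}(k)$ (max-plus product) and suppose that $\|\bm{D}_{rk}\|^{1/k}\to\mu_{r}$ with probability one as $k\to\infty$, i.e. $\frac1k\max_{i,j}(\bm{D}_{rk})_{ij}\to\mu_r$ w.p.1. Then the Lyapunov exponent of the system is \[ \lambda=\lim_{k\to\infty}\|\bm{x}(k)\|^{1/k}=\lim_{k\to\infty}\frac1k\max_{1\le i\le n}x_i(k)=\bigoplus_{r=1}^{s}\mu_r=\max_{1\le r\le s}\mu_r \] (with probability one).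
   Context: Max-plus algebra is $(\mathbb{R}\cup\{-\infty\},\oplus=\max,\otimes=+)$ with zero $\mathbb{0}=-\infty$ and identity $\mathbb{1}=0$; matrix products are $(\bm{A}\bm{C})_{ij}=\max_k(a_{ik}+c_{kj})$, and $\bm{0}$ denotes a block with all entries $-\infty$. $\bm{1}$ is the vector with all entries $0$. The tropical norm of a matrix or vector is the maximum of its entries, and scalar power $x^{1/k}$ means $x/k$. Standing assumptions on the system: each entry of $\bm{A}(k)$ is either a constant or a random variable; corresponding random entries of $\bm{A}(1),\bm{A}(2),\ldots$ are independent and identically distributed with finite expectation and variance (entries within one matrix need not be independent). Note $\bm{x}(k)=(\bm{A}(1)\cdots\bm{A}(k))^{T}\bm{x}(0)$. *)

theory Defs
  imports "HOL-Probability.Probability"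
begin

text \<open>Max-plus algebra over ereal: oplus = max (Sup), otimes = +, zero = -infinity, one = 0.
  Square d x d matrices are functions nat => nat => ereal, only indices < d matter.\<close>

definition mp_mult :: "nat \<Rightarrow> (nat \<Rightarrow> nat \<Rightarrow> ereal) \<Rightarrow> (nat \<Rightarrow> nat \<Rightarrow> ereal) \<Rightarrow> nat \<Rightarrow> nat \<Rightarrow> ereal" where
  "mp_mult d X Y i j = (SUP l\<in>{..<d}. X i l + Y l j)"

definition mp_id :: "nat \<Rightarrow> nat \<Rightarrow> ereal" where
  "mp_id i j = (if i = j then 0 else -\<infinity>)"

fun mp_prod :: "nat \<Rightarrow> (nat \<Rightarrow> nat \<Rightarrow> nat \<Rightarrow> ereal) \<Rightarrow> nat \<Rightarrow> nat \<Rightarrow> nat \<Rightarrow> ereal" where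
  "mp_prod d B 0 = mp_id"
| "mp_prod d B (Suc k) = mp_mult d (mp_prod d B k) (B (Suc k))"

definition mp_mat_norm :: "nat \<Rightarrow> (nat \<Rightarrow> nat \<Rightarrow> ereal) \<Rightarrow> ereal" where
  "mp_mat_norm d X = (SUP i\<in>{..<d}. SUP j\<in>{..<d}. X i j)"

definition mp_vec_norm :: "nat \<Rightarrow> (nat \<Rightarrow> ereal) \<Rightarrow> ereal" where
  "mp_vec_norm d x = (SUP i\<in>{..<d}. x i)"

text \<open>State of the system x(k) = A(k)^T x(k-1), x(0) = 1 (all-zero vector).\<close>
fun mp_state :: "nat \<Rightarrow> (nat \<Rightarrow> nat \<Rightarrow> nat \<Rightarrow> ereal) \<Rightarrow> nat \<Rightarrow> nat \<Rightarrow> ereal" where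
  "mp_state d A 0 = (\<lambda>i. 0)"
| "mp_state d A (Suc k) = (\<lambda>i. SUP j\<in>{..<d}. A (Suc k) j i + mp_state d A k j)"

text \<open>Block structure given by the list of block sizes ns: block r occupies indices
  blk_off ns r, ..., blk_off ns r + ns!r - 1.\<close>
definition blk_off :: "nat list \<Rightarrow> nat \<Rightarrow> nat" where
  "blk_off ns r = sum_list (take r ns)"

definition blk_of :: "nat list \<Rightarrow> nat \<Rightarrow> nat" where
  "blk_of ns i = (THE r. r < length ns \<and> blk_off ns r \<le> i \<and> i < blk_off ns r + ns ! r)"

definition diag_block :: "nat list \<Rightarrow> nat \<Rightarrow> (nat \<Rightarrow> nat \<Rightarrow> ereal) \<Rightarrow> nat \<Rightarrow> nat \<Rightarrow> ereal" where
  "diag_block ns r X a b = X (blk_off ns r + a) (blk_off ns r + b)"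

end

theory Submission imports Defs begin

text \<open>Since \<open>x(0) = \<one>\<close>, the state is \<open>x(k) = (A(1) \<cdots> A(k))\<^sup>T \<one>\<close>, so \<open>\<parallel>x(k)\<parallel>\<close> is the
  norm of the product \<open>A(1) \<cdots> A(k)\<close>. Block-diagonal matrices are closed under max-plus
  multiplication and the diagonal blocks of a product are the products of the diagonal
  blocks; hence \<open>\<parallel>x(k)\<parallel> = max\<^sub>r \<parallel>D\<^sub>r\<^sub>k\<parallel>\<close> for every \<open>k\<close>. Dividing by \<open>k\<close> and using that a
  maximum of finitely many convergent sequences converges to the maximum of the limits
  gives the Lyapunov exponent on the intersection of the finitely many almost-sure events.\<close>

lemma mono_SUP_finite_commute:
  fixes f :: "'a \<Rightarrow> 'b::complete_linorder" and g :: "'b \<Rightarrow> 'c::complete_linorder"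
  assumes "mono g" "finite S" "S \<noteq> {}"
  shows "g (SUP x\<in>S. f x) = (SUP x\<in>S. g (f x))"
  using mono_Max_commute[OF assms(1), of "f ` S"] assms(2,3)
  by (simp add: cSup_eq_Max image_image)

lemma SUP_finite_neq_infty:
  fixes f :: "'a \<Rightarrow> ereal"
  assumes "finite S" "\<And>x. x \<in> S \<Longrightarrow> f x \<noteq> \<infinity>"
  shows "(SUP x\<in>S. f x) \<noteq> \<infinity>"
proof (cases "S = {}")
  case False
  then have "Max (f ` S) \<in> f ` S" using assms(1) by (intro Max_in) auto
  then obtain x where "x \<in> S" "Max (f ` S) = f x" by auto
  then show ?thesis using assms False by (simp add: cSup_eq_Max)
qed (simp add: bot_ereal_def)

lemma tendsto_SUP_finite:
  fixes f :: "'i \<Rightarrow> 'a \<Rightarrow> ereal"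
  assumes "finite S" "S \<noteq> {}" "\<And>r. r \<in> S \<Longrightarrow> (f r \<longlongrightarrow> l r) F"
  shows "((\<lambda>k. SUP r\<in>S. f r k) \<longlongrightarrow> (SUP r\<in>S. l r)) F"
  using assms
proof (induction S rule: finite_ne_induct)
  case (insert x S)
  then show ?case by (simp add: sup_max tendsto_max)
qed simp

lemma mp_mult_neq_infty:
  assumes "\<And>i j. X i j \<noteq> \<infinity>" "\<And>i j. Y i j \<noteq> \<infinity>"
  shows "mp_mult d X Y i j \<noteq> \<infinity>"
  unfolding mp_mult_def using assms by (intro SUP_finite_neq_infty) auto

lemma mp_prod_neq_infty:
  assumes "\<And>k i j. B k i j \<noteq> \<infinity>"
  shows "mp_prod d B k i j \<noteq> \<infinity>"
  using assms by (induction k arbitrary: i j) (auto simp: mp_id_def mp_mult_neq_infty)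

lemma blk_off_Suc: "r < length ns \<Longrightarrow> blk_off ns (Suc r) = blk_off ns r + ns ! r"
  by (simp add: blk_off_def take_Suc_conv_app_nth)

lemma blk_off_mono: "r \<le> r' \<Longrightarrow> blk_off ns r \<le> blk_off ns r'"
proof (induction r' rule: dec_induct)
  case (step m)
  then show ?case
    by (cases "m < length ns") (auto simp: blk_off_Suc, simp add: blk_off_def)
qed simp

lemma blk_off_add_le_sum_list: "r < length ns \<Longrightarrow> blk_off ns r + ns ! r \<le> sum_list ns"
  using blk_off_mono[of "Suc r" "length ns" ns] blk_off_Suc[of r ns] by (simp add: blk_off_def)

lemma blk_exists:
  "i < sum_list ns \<Longrightarrow> \<exists>r<length ns. blk_off ns r \<le> i \<and> i < blk_off ns r + ns ! r"
proof (induction ns arbitrary: i)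
  case (Cons x xs)
  show ?case
  proof (cases "i < x")
    case True
    then show ?thesis by (intro exI[of _ 0]) (simp add: blk_off_def)
  next
    case False
    then have "i - x < sum_list xs" using Cons.prems by simp
    then obtain r where "r < length xs" "blk_off xs r \<le> i - x" "i - x < blk_off xs r + xs ! r"
      using Cons.IH by blast
    with False show ?thesis by (intro exI[of _ "Suc r"]) (auto simp: blk_off_def)
  qed
qed simp

lemma blk_unique:
  assumes "r < length ns" "blk_off ns r \<le> i" "i < blk_off ns r + ns ! r"
    and "r' < length ns" "blk_off ns r' \<le> i" "i < blk_off ns r' + ns ! r'"
  shows "r = r'"
proof (rule ccontr)
  have disjoint: False if "s < s'" "s < length ns" "i < blk_off ns s + ns ! s" "blk_off ns s' \<le> i"
    for s s'
    using blk_off_mono[of "Suc s" s' ns] blk_off_Suc[of s ns] that by simp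
  assume "r \<noteq> r'"
  then show False using assms disjoint[of r r'] disjoint[of r' r] by linarith
qed

lemma blk_of_eq:
  assumes "r < length ns" "blk_off ns r \<le> i" "i < blk_off ns r + ns ! r"
  shows "blk_of ns i = r"
  unfolding blk_of_def
proof (rule the_equality)
  show "r < length ns \<and> blk_off ns r \<le> i \<and> i < blk_off ns r + ns ! r"
    using assms by simp
  show "r' = r" if "r' < length ns \<and> blk_off ns r' \<le> i \<and> i < blk_off ns r' + ns ! r'" for r'
    using blk_unique[OF assms] that by blast
qed

lemma blk_of_eq_iff:
  assumes r: "r < length ns" and i: "i < sum_list ns"
  shows "blk_of ns i = r \<longleftrightarrow> blk_off ns r \<le> i \<and> i < blk_off ns r + ns ! r"
proof
  obtain r' where r': "r' < length ns" "blk_off ns r' \<le> i" "i < blk_off ns r' + ns ! r'"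
    using blk_exists[OF i] by blast
  moreover assume "blk_of ns i = r"
  ultimately have "r' = r" using blk_of_eq[OF r'] by simp
  with r' show "blk_off ns r \<le> i \<and> i < blk_off ns r + ns ! r" by simp
qed (simp add: blk_of_eq r)

lemma blk_of_blk_off_add: "r < length ns \<Longrightarrow> c < ns ! r \<Longrightarrow> blk_of ns (blk_off ns r + c) = r"
  by (simp add: blk_of_eq)

definition block_diagonal :: "nat list \<Rightarrow> (nat \<Rightarrow> nat \<Rightarrow> ereal) \<Rightarrow> bool" where
  "block_diagonal ns X \<longleftrightarrow>
     (\<forall>i<sum_list ns. \<forall>j<sum_list ns. blk_of ns i \<noteq> blk_of ns j \<longrightarrow> X i j = -\<infinity>)"

lemma block_diagonal_mp_id: "block_diagonal ns mp_id"
  by (auto simp: block_diagonal_def mp_id_def)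

text \<open>The finiteness hypotheses matter: in \<open>ereal\<close>, \<open>\<infinity> + -\<infinity> = \<infinity>\<close>.\<close>

lemma block_diagonal_mp_mult:
  assumes "block_diagonal ns X" "block_diagonal ns Y"
    and "\<And>i j. X i j \<noteq> \<infinity>" "\<And>i j. Y i j \<noteq> \<infinity>"
  shows "block_diagonal ns (mp_mult (sum_list ns) X Y)"
  unfolding block_diagonal_def
proof (intro allI impI)
  fix i j assume ij: "i < sum_list ns" "j < sum_list ns" "blk_of ns i \<noteq> blk_of ns j"
  have "X i l + Y l j = -\<infinity>" if "l < sum_list ns" for l
  proof (cases "blk_of ns l = blk_of ns i")
    case True
    then have "Y l j = -\<infinity>" using assms(2) ij that by (auto simp: block_diagonal_def)
    then show ?thesis using assms(3) by simp
  next
    case False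
    then have "X i l = -\<infinity>" using assms(1) ij that by (auto simp: block_diagonal_def)
    then show ?thesis using assms(4) by simp
  qed
  then have "mp_mult (sum_list ns) X Y i j \<le> -\<infinity>"
    unfolding mp_mult_def by (intro SUP_least) simp
  then show "mp_mult (sum_list ns) X Y i j = -\<infinity>" by simp
qed

lemma block_diagonal_mp_prod:
  assumes "\<And>k. block_diagonal ns (B k)" "\<And>k i j. B k i j \<noteq> \<infinity>"
  shows "block_diagonal ns (mp_prod (sum_list ns) B k)"
proof (induction k)
  case (Suc k)
  then show ?case using assms by (simp add: block_diagonal_mp_mult mp_prod_neq_infty)
qed (simp add: block_diagonal_mp_id)

lemma diag_block_mp_mult:
  assumes X: "block_diagonal ns X" and Y: "\<And>i j. Y i j \<noteq> \<infinity>"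
    and r: "r < length ns" and "a < ns ! r" "b < ns ! r"
  shows "diag_block ns r (mp_mult (sum_list ns) X Y) a b
    = mp_mult (ns ! r) (diag_block ns r X) (diag_block ns r Y) a b"
proof -
  let ?o = "blk_off ns r"
  have idx_lt: "?o + c < sum_list ns" if "c < ns ! r" for c
    using blk_off_add_le_sum_list[OF r] that by linarith
  show ?thesis
    unfolding diag_block_def mp_mult_def
  proof (rule antisym)
    show "(SUP l\<in>{..<sum_list ns}. X (?o + a) l + Y l (?o + b))
      \<le> (SUP c\<in>{..<ns ! r}. X (?o + a) (?o + c) + Y (?o + c) (?o + b))"
    proof (rule SUP_least)
      fix l assume l: "l \<in> {..<sum_list ns}"
      show "X (?o + a) l + Y l (?o + b) \<le> (SUP c\<in>{..<ns ! r}. X (?o + a) (?o + c) + Y (?o + c) (?o + b))"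
      proof (cases "blk_of ns l = r")
        case True
        then have "l = ?o + (l - ?o)" "l - ?o < ns ! r" using blk_of_eq_iff[OF r] l by auto
        then show ?thesis by (intro SUP_upper2[of "l - ?o"]) auto
      next
        case False
        then have "X (?o + a) l = -\<infinity>"
          using X l idx_lt \<open>a < ns ! r\<close> blk_of_blk_off_add[OF r]
          by (auto simp: block_diagonal_def)
        then have "X (?o + a) l + Y l (?o + b) = -\<infinity>" using Y by simp
        then show ?thesis by (simp del: ereal_plus_eq_MInfty)
      qed
    qed
    show "(SUP c\<in>{..<ns ! r}. X (?o + a) (?o + c) + Y (?o + c) (?o + b))
      \<le> (SUP l\<in>{..<sum_list ns}. X (?o + a) l + Y l (?o + b))"
      using idx_lt by (intro SUP_least SUP_upper2) auto
  qed
qed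

lemma diag_block_mp_prod:
  assumes "\<And>k. block_diagonal ns (B k)" "\<And>k i j. B k i j \<noteq> \<infinity>"
    and r: "r < length ns"
  shows "a < ns ! r \<Longrightarrow> b < ns ! r \<Longrightarrow>
    diag_block ns r (mp_prod (sum_list ns) B k) a b = mp_prod (ns ! r) (\<lambda>k. diag_block ns r (B k)) k a b"
proof (induction k arbitrary: a b)
  case 0
  then show ?case by (simp add: diag_block_def mp_id_def)
next
  case (Suc k)
  have "diag_block ns r (mp_prod (sum_list ns) B (Suc k)) a b
      = mp_mult (ns ! r) (diag_block ns r (mp_prod (sum_list ns) B k)) (diag_block ns r (B (Suc k))) a b"
    using Suc.prems by (simp add: diag_block_mp_mult block_diagonal_mp_prod assms)
  also have "\<dots> = mp_prod (ns ! r) (\<lambda>k. diag_block ns r (B k)) (Suc k) a b"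
    using Suc by (simp add: mp_mult_def)
  finally show ?case .
qed

lemma mp_mat_norm_block_diagonal:
  assumes X: "block_diagonal ns X"
  shows "mp_mat_norm (sum_list ns) X = (SUP r\<in>{..<length ns}. mp_mat_norm (ns ! r) (diag_block ns r X))"
  unfolding mp_mat_norm_def
proof (rule antisym)
  let ?N = "\<lambda>r. SUP a\<in>{..<ns ! r}. SUP b\<in>{..<ns ! r}. diag_block ns r X a b"
  show "(SUP i\<in>{..<sum_list ns}. SUP j\<in>{..<sum_list ns}. X i j) \<le> (SUP r\<in>{..<length ns}. ?N r)"
  proof (intro SUP_least)
    fix i j assume i: "i \<in> {..<sum_list ns}" and j: "j \<in> {..<sum_list ns}"
    obtain r where r: "r < length ns" "blk_off ns r \<le> i" "i < blk_off ns r + ns ! r"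
      using blk_exists i by blast
    then have i_in_r: "blk_of ns i = r" by (rule blk_of_eq)
    show "X i j \<le> (SUP r\<in>{..<length ns}. ?N r)"
    proof (cases "blk_of ns j = r")
      case True
      then have "blk_off ns r \<le> j" "j < blk_off ns r + ns ! r" using blk_of_eq_iff[OF r(1)] j by auto
      then have "X i j \<le> ?N r"
        using r unfolding diag_block_def
        by (intro SUP_upper2[of "i - blk_off ns r"] SUP_upper2[of "j - blk_off ns r"]) auto
      also have "\<dots> \<le> (SUP r\<in>{..<length ns}. ?N r)" using r by (intro SUP_upper) auto
      finally show ?thesis .
    next
      case False
      then show ?thesis using X i j i_in_r by (simp add: block_diagonal_def)
    qed
  qed
  show "(SUP r\<in>{..<length ns}. ?N r) \<le> (SUP i\<in>{..<sum_list ns}. SUP j\<in>{..<sum_list ns}. X i j)"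
  proof (intro SUP_least)
    fix r a b assume "r \<in> {..<length ns}" "a \<in> {..<ns ! r}" "b \<in> {..<ns ! r}"
    moreover from this have "blk_off ns r + ns ! r \<le> sum_list ns"
      by (simp add: blk_off_add_le_sum_list)
    ultimately show "diag_block ns r X a b \<le> (SUP i\<in>{..<sum_list ns}. SUP j\<in>{..<sum_list ns}. X i j)"
      unfolding diag_block_def
      by (intro SUP_upper2[of "blk_off ns r + a"] SUP_upper2[of "blk_off ns r + b"]) auto
  qed
qed

lemma mp_state_eq_SUP_mp_prod:
  assumes "0 < n" "i < n"
  shows "mp_state n B k i = (SUP j\<in>{..<n}. mp_prod n B k j i)"
  using assms(2)
proof (induction k arbitrary: i)
  case 0
  have "(SUP j\<in>{..<n}. mp_id j i) = 0"
    using 0 by (intro antisym SUP_least SUP_upper2[of i]) (auto simp: mp_id_def)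
  then show ?case by simp
next
  case (Suc k)
  have "mp_state n B (Suc k) i = (SUP j\<in>{..<n}. B (Suc k) j i + (SUP l\<in>{..<n}. mp_prod n B k l j))"
    using Suc by simp
  also have "\<dots> = (SUP j\<in>{..<n}. SUP l\<in>{..<n}. B (Suc k) j i + mp_prod n B k l j)"
    using assms(1) by (intro SUP_cong mono_SUP_finite_commute) (auto simp: mono_def add_left_mono)
  also have "\<dots> = (SUP l\<in>{..<n}. SUP j\<in>{..<n}. B (Suc k) j i + mp_prod n B k l j)"
    by (rule SUP_commute)
  also have "\<dots> = (SUP l\<in>{..<n}. mp_prod n B (Suc k) l i)"
    by (simp add: mp_mult_def add.commute)
  finally show ?case .
qed

lemma mp_vec_norm_mp_state:
  assumes "0 < n"
  shows "mp_vec_norm n (mp_state n B k) = mp_mat_norm n (mp_prod n B k)"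
proof -
  have "mp_vec_norm n (mp_state n B k) = (SUP i\<in>{..<n}. SUP j\<in>{..<n}. mp_prod n B k j i)"
    unfolding mp_vec_norm_def using mp_state_eq_SUP_mp_prod[OF assms] by (intro SUP_cong) auto
  also have "\<dots> = mp_mat_norm n (mp_prod n B k)"
    unfolding mp_mat_norm_def by (rule SUP_commute)
  finally show ?thesis .
qed

lemma mp_vec_norm_mp_state_block_diagonal:
  assumes "ns \<noteq> []" "\<forall>r<length ns. 0 < ns ! r"
    and "\<And>k. block_diagonal ns (B k)" "\<And>k i j. B k i j \<noteq> \<infinity>"
  shows "mp_vec_norm (sum_list ns) (mp_state (sum_list ns) B k)
    = (SUP r\<in>{..<length ns}. mp_mat_norm (ns ! r) (mp_prod (ns ! r) (\<lambda>k. diag_block ns r (B k)) k))"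
proof -
  have "0 < sum_list ns"
    using assms(1,2) blk_off_add_le_sum_list[of 0 ns] by (auto simp: blk_off_def)
  then have "mp_vec_norm (sum_list ns) (mp_state (sum_list ns) B k)
      = (SUP r\<in>{..<length ns}. mp_mat_norm (ns ! r) (diag_block ns r (mp_prod (sum_list ns) B k)))"
    by (simp add: mp_vec_norm_mp_state mp_mat_norm_block_diagonal block_diagonal_mp_prod assms)
  also have "\<dots> = (SUP r\<in>{..<length ns}. mp_mat_norm (ns ! r) (mp_prod (ns ! r) (\<lambda>k. diag_block ns r (B k)) k))"
    by (intro SUP_cong refl) (simp add: mp_mat_norm_def diag_block_mp_prod assms)
  finally show ?thesis .
qed

lemma mp_state_growth_rate_block_diagonal:
  assumes "ns \<noteq> []" "\<forall>r<length ns. 0 < ns ! r"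
    and "\<And>k. block_diagonal ns (B k)" "\<And>k i j. B k i j \<noteq> \<infinity>"
    and lim: "\<And>r. r < length ns \<Longrightarrow>
      (\<lambda>k. mp_mat_norm (ns ! r) (mp_prod (ns ! r) (\<lambda>k. diag_block ns r (B k)) k) / ereal (real k))
        \<longlonglongrightarrow> \<mu> r"
  shows "(\<lambda>k. mp_vec_norm (sum_list ns) (mp_state (sum_list ns) B k) / ereal (real k))
    \<longlonglongrightarrow> Max (\<mu> ` {..<length ns})"
proof -
  let ?N = "\<lambda>r k. mp_mat_norm (ns ! r) (mp_prod (ns ! r) (\<lambda>k. diag_block ns r (B k)) k)"
  have ne: "{..<length ns} \<noteq> {}" using assms(1) by auto
  have lim_SUP: "(\<lambda>k. SUP r\<in>{..<length ns}. ?N r k / ereal (real k)) \<longlonglongrightarrow> (SUP r\<in>{..<length ns}. \<mu> r)"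
    using ne lim by (intro tendsto_SUP_finite) auto
  have "\<forall>\<^sub>F k in sequentially. (SUP r\<in>{..<length ns}. ?N r k / ereal (real k))
      = mp_vec_norm (sum_list ns) (mp_state (sum_list ns) B k) / ereal (real k)"
  proof (rule eventually_sequentiallyI[of 1])
    fix k :: nat assume "1 \<le> k"
    then show "(SUP r\<in>{..<length ns}. ?N r k / ereal (real k))
      = mp_vec_norm (sum_list ns) (mp_state (sum_list ns) B k) / ereal (real k)"
      using ne mono_SUP_finite_commute[of "\<lambda>x. x / ereal (real k)" "{..<length ns}"]
      by (simp add: mp_vec_norm_mp_state_block_diagonal assms mono_def ereal_divide_right_mono)
  qed
  with lim_SUP have "(\<lambda>k. mp_vec_norm (sum_list ns) (mp_state (sum_list ns) B k) / ereal (real k))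
    \<longlonglongrightarrow> (SUP r\<in>{..<length ns}. \<mu> r)"
    by (rule Lim_transform_eventually)
  then show ?thesis using ne by (simp add: cSup_eq_Max)
qed

theorem lemma2:
  fixes M :: "'w measure" and A :: "nat \<Rightarrow> 'w \<Rightarrow> nat \<Rightarrow> nat \<Rightarrow> ereal"
    and ns :: "nat list" and n :: nat and \<mu> :: "nat \<Rightarrow> ereal"
  assumes "prob_space M"
    and "ns \<noteq> []" and "\<forall>r<length ns. 0 < ns ! r" and "n = sum_list ns"
    and "\<forall>k \<omega> i j. A k \<omega> i j \<noteq> \<infinity>"
    and "\<forall>k \<omega> i j. i < n \<and> j < n \<and> blk_of ns i \<noteq> blk_of ns j \<longrightarrow> A k \<omega> i j = -\<infinity>"
    and "\<forall>r<length ns. AE \<omega> in M.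
           (\<lambda>k. mp_mat_norm (ns ! r) (mp_prod (ns ! r) (\<lambda>k. diag_block ns r (A k \<omega>)) k) / ereal (real k))
             \<longlonglongrightarrow> \<mu> r"
  shows "AE \<omega> in M.
           (\<lambda>k. mp_vec_norm n (mp_state n (\<lambda>k. A k \<omega>) k) / ereal (real k))
             \<longlonglongrightarrow> Max (\<mu> ` {..<length ns})"
proof -
  have block_diagonal: "\<And>k \<omega>. block_diagonal ns (A k \<omega>)"
    using assms(4,6) by (simp add: block_diagonal_def)
  have "AE \<omega> in M. \<forall>r\<in>{..<length ns}.
      (\<lambda>k. mp_mat_norm (ns ! r) (mp_prod (ns ! r) (\<lambda>k. diag_block ns r (A k \<omega>)) k) / ereal (real k))
        \<longlonglongrightarrow> \<mu> r"
    using assms(7) by (intro AE_finite_allI) auto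
  then show ?thesis
  proof (rule eventually_mono)
    fix \<omega>
    assume "\<forall>r\<in>{..<length ns}.
      (\<lambda>k. mp_mat_norm (ns ! r) (mp_prod (ns ! r) (\<lambda>k. diag_block ns r (A k \<omega>)) k) / ereal (real k))
        \<longlonglongrightarrow> \<mu> r"
    then show "(\<lambda>k. mp_vec_norm n (mp_state n (\<lambda>k. A k \<omega>) k) / ereal (real k))
        \<longlonglongrightarrow> Max (\<mu> ` {..<length ns})"
      unfolding assms(4) using assms(2,3,5) block_diagonal
      by (intro mp_state_growth_rate_block_diagonal) auto
  qed
qed

end
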